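(* For each site $j\in\mathbb{Z}^d$ let $(\lambda_j(k))_{k\ge-1}$ be a probability distribution on $\{-1,0,1,\dots\}$ with $\sup_j\sum_{k\ge0}|V_j(k)|\lambda_j(k)<1$. Enumerate its values as $-1,0,1,\dots$ and let $0=\theta_j(1)\le\theta_j(2)\le\cdots$ be the corresponding cumulative boundaries, $\theta_j(l+1)=\theta_j(l)+\lambda_j(l-2)$, so that $[0,1)=\bigcup_{l\ge1}[\theta_j(l),\theta_j(l+1))$. Let $(Y_r)_{r\ge1}$ be i.i.d. fair Bernoulli variables, $S_m=\sum_{r=1}^m2^{-r}Y_r$, $J_j(x)=\sup\{l\ge1:\theta_j(l)\le x\}$, and $$N(j)=\inf\{m\ge1: J_j(S_m)=J_j(S_{m'})\text{ for all }m'\ge m\}.$$ Then $\sup_{j\in\mathbb{Z}^d}E[N(j)]<\infty$.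
   Context: $V_j(k)=\{i\in\mathbb{Z}^d:\sum_u|i_u-j_u|\le k\}$ for $k\ge0$. $N(j)$ is the number of fair coin flips needed to determine, by binary expansion of a uniform variable, the sample of a random variable with law $\lambda_j$. *)

theory Defs
  imports "HOL-Probability.Probability"
begin

definition Vball :: "int ^ 'd \<Rightarrow> nat \<Rightarrow> (int ^ 'd) set" where
  "Vball j k = {i. (\<Sum>u\<in>UNIV. \<bar>i $ u - j $ u\<bar>) \<le> int k}"

text \<open>Cumulative boundaries: theta(1) = 0, theta(l+1) = theta(l) + lambda(l-2).
  The index 0 is unused.\<close>
fun theta :: "(int \<Rightarrow> real) \<Rightarrow> nat \<Rightarrow> real" where
  "theta p 0 = 0"
| "theta p (Suc 0) = 0"
| "theta p (Suc (Suc l)) = theta p (Suc l) + p (int (Suc l) - 2)"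

definition Jidx :: "(int \<Rightarrow> real) \<Rightarrow> real \<Rightarrow> nat" where
  "Jidx p x = Sup {l. 1 \<le> l \<and> theta p l \<le> x}"

definition Spart :: "(nat \<Rightarrow> 'a \<Rightarrow> bool) \<Rightarrow> nat \<Rightarrow> 'a \<Rightarrow> real" where
  "Spart Y m \<omega> = (\<Sum>r\<in>{1..m}. (1/2) ^ r * of_bool (Y r \<omega>))"

text \<open>N = inf {m >= 1. J(S_m) = J(S_m') for all m' >= m}, with inf of the empty set = infinity.\<close>
definition Ncoin :: "(int \<Rightarrow> real) \<Rightarrow> (nat \<Rightarrow> 'a \<Rightarrow> bool) \<Rightarrow> 'a \<Rightarrow> enat" where
  "Ncoin p Y \<omega> = Inf {enat m | m. 1 \<le> m \<and>
      (\<forall>m'\<ge>m. Jidx p (Spart Y m \<omega>) = Jidx p (Spart Y m' \<omega>))}"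

end

theory Submission
  imports Defs
begin

(* Write p = lambda_j, theta_l for the boundaries and S_m for the dyadic partial sums.
   (1) If N > m, then some boundary theta_l lies in the open window (S_m, S_m + 2^-m): otherwise
       every later S_m' (which stays in [S_m, S_m + 2^-m)) falls into the same cell [theta_J, theta_J+1).
   (2) With fair independent coins, S_m hits any half-open interval of length 2^-m with
       probability at most 2^-m (induction on m, conditioning on the last coin).
   (3) Hence P(N > m) <= sum over l with 2^-m < 1 - theta_l of 2^-m, plus 2*2^-m for the
       boundaries packed into the last window below 1.  Summing over m and exchanging the sums
       gives E[N] <= 2 * sum_l (1 - theta_l) + 4.
   (4) The tail sum equals 2 + sum_k (k+1) p(k), and k + 1 <= |V_j(k)|, so the hypothesis bounds
       it by 2 + c < 3 uniformly in j; therefore E[N(j)] <= 10 for every site j.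
   The file follows this order: general facts about nonnegative series, the boundaries theta and
   the cell index Jidx, the dyadic partial sums, the probabilistic estimates inside a locale of
   fair coins, the moment bound, and finally the theorem. *)


section \<open>Series of extended nonnegative reals\<close>

lemma ennreal_of_enat_sums: "(\<lambda>i::nat. if enat i < n then 1 else 0 :: ennreal) sums ennreal_of_enat n"
  using sums_If_finite[of "\<lambda>i. enat i < n" "\<lambda>_. 1 :: ennreal"]
  by (cases n) (simp_all add: sums_def of_nat_tendsto_top_ennreal)

lemma suminf_swap_ennreal:
  fixes f :: "nat \<Rightarrow> nat \<Rightarrow> ennreal"
  shows "(\<Sum>i. \<Sum>j. f i j) = (\<Sum>j. \<Sum>i. f i j)"
proof -
  have "(\<Sum>i. \<Sum>j. f i j) = (\<integral>\<^sup>+i. \<integral>\<^sup>+j. f i j \<partial>count_space UNIV \<partial>count_space UNIV)"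
    by (simp add: nn_integral_count_space_nat)
  also have "\<dots> = (\<integral>\<^sup>+j. \<integral>\<^sup>+i. f i j \<partial>count_space UNIV \<partial>count_space UNIV)"
    by (rule nn_integral_count_space_nn_integral) auto
  also have "\<dots> = (\<Sum>j. \<Sum>i. f i j)"
    by (simp add: nn_integral_count_space_nat)
  finally show ?thesis .
qed

lemma dyadic_sum_below:
  fixes t :: real
  assumes t: "0 \<le> t"
  shows "(\<Sum>m. ennreal (if (1/2::real)^m < t then (1/2)^m else 0)) \<le> ennreal (2 * t)"
proof (cases "t = 0")
  case True
  then have "ennreal (if (1/2::real)^m < t then (1/2)^m else 0) = 0" for m by simp
  then show ?thesis by simp
next
  case False
  then have "0 < t" using t by simp
  then obtain n where "(1/2::real)^n < t" using real_arch_pow_inv[of t "1/2"] by auto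
  define m0 where "m0 = (LEAST m. (1/2::real)^m < t)"
  have m0: "(1/2::real)^m0 < t" unfolding m0_def using \<open>(1/2)^n < t\<close> by (rule LeastI)
  have below: "\<not> (1/2::real)^m < t" if "m < m0" for m
    using that unfolding m0_def by (rule not_less_Least)
  have above: "(1/2::real)^(k + m0) < t" for k
  proof -
    have "(1/2::real)^(k + m0) \<le> (1/2)^m0" by (intro power_decreasing) auto
    with m0 show ?thesis by linarith
  qed
  let ?g = "\<lambda>m. ennreal (if (1/2::real)^m < t then (1/2)^m else 0)"
  have "(\<Sum>k<m0. ?g k) = 0" using below by simp
  then have "(\<Sum>m. ?g m) = (\<Sum>k. ?g (k + m0))"
    using suminf_offset[OF summableI, of ?g m0] by simp
  also have "(\<Sum>k. ?g (k + m0)) = (\<Sum>k. ennreal ((1/2)^m0 * (1/2)^k))"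
  proof (rule suminf_cong)
    fix k
    from above[of k] show "?g (k + m0) = ennreal ((1/2)^m0 * (1/2)^k)"
      by (simp add: power_add mult.commute)
  qed
  also have "\<dots> = ennreal ((1/2)^m0 * 2)"
  proof (rule suminf_ennreal_eq)
    show "(\<lambda>k. (1/2::real)^m0 * (1/2)^k) sums ((1/2)^m0 * 2)"
      using sums_mult[OF geometric_sums[of "1/2::real"], of "(1/2)^m0"] by simp
  qed simp
  also have "\<dots> \<le> ennreal (2 * t)" using m0 by (intro ennreal_leI) simp
  finally show ?thesis .
qed

section \<open>The boundaries \<open>theta\<close> and the cell index\<close>

lemma theta_Suc: "theta p (Suc l) = (\<Sum>i<l. p (int i - 1))"
proof (induction l)
  case (Suc l)
  have "int (Suc l) - 2 = int l - 1" by simp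
  with Suc show ?case by simp
qed simp

lemma pmf_shift_sums:
  fixes q :: "int pmf"
  assumes supp: "set_pmf q \<subseteq> {-1..}"
  shows "(\<lambda>i. pmf q (int i - 1)) sums 1"
proof -
  have inj: "inj (\<lambda>i::nat. int i - 1)" by (auto simp: inj_on_def)
  have "x = int (nat (x + 1)) - 1" if "x \<in> {-1..}" for x using that by simp
  then have "range (\<lambda>i::nat. int i - 1) = {-1..}" by fastforce
  then have "(\<Sum>i. ennreal (pmf q (int i - 1))) = emeasure (measure_pmf q) {-1..}"
    using nn_integral_pmf'[OF inj, of q] by (simp add: nn_integral_count_space_nat)
  also have "\<dots> = 1"
    using supp by (simp add: measure_pmf.emeasure_eq_1_AE AE_measure_pmf_iff subset_eq)
  finally show ?thesis
    by (metis ennreal_1 summableI summable_sums sums_ennreal pmf_nonneg zero_le_one)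
qed

lemma theta_mono:
  assumes "l \<le> l'" shows "theta (pmf q) l \<le> theta (pmf q) l'"
proof (rule monoD[OF incseq_SucI assms])
  show "theta (pmf q) n \<le> theta (pmf q) (Suc n)" for n
    by (cases n) (auto simp: theta_Suc)
qed

lemma theta_tail_sums:
  fixes q :: "int pmf"
  assumes supp: "set_pmf q \<subseteq> {-1..}"
  shows "(\<lambda>k. pmf q (int (k + l))) sums (1 - theta (pmf q) (Suc (Suc l)))"
proof -
  have "(\<lambda>n. pmf q (int (n + Suc l) - 1)) sums (1 - (\<Sum>i<Suc l. pmf q (int i - 1)))"
    by (rule sums_split_initial_segment[OF pmf_shift_sums[OF supp]])
  moreover have "int (n + Suc l) - 1 = int (n + l)" for n by simp
  ultimately show ?thesis by (simp only: theta_Suc)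
qed

lemma theta_le_1:
  fixes q :: "int pmf"
  assumes supp: "set_pmf q \<subseteq> {-1..}"
  shows "theta (pmf q) l \<le> 1"
proof -
  have "0 \<le> 1 - theta (pmf q) (Suc (Suc l))"
    by (rule sums_le[OF _ sums_zero theta_tail_sums[OF supp]]) simp
  moreover have "theta (pmf q) l \<le> theta (pmf q) (Suc (Suc l))" by (rule theta_mono) simp
  ultimately show ?thesis by linarith
qed

text \<open>The boundaries exhaust \<open>[0,1)\<close>, so every \<open>x < 1\<close> lies below some boundary.\<close>
lemma theta_exceeds:
  fixes q :: "int pmf"
  assumes supp: "set_pmf q \<subseteq> {-1..}" and x: "x < 1"
  shows "\<exists>l. x < theta (pmf q) l"
proof -
  have "(\<lambda>n. \<Sum>i<n. pmf q (int i - 1)) \<longlonglongrightarrow> 1"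
    using pmf_shift_sums[OF supp] by (simp add: sums_def)
  from order_tendstoD(1)[OF this x] obtain n where "x < (\<Sum>i<n. pmf q (int i - 1))"
    by (auto simp: eventually_sequentially)
  then show ?thesis by (metis theta_Suc)
qed

lemma Jidx_greatest:
  fixes q :: "int pmf"
  assumes supp: "set_pmf q \<subseteq> {-1..}" and x: "0 \<le> x" "x < 1"
  shows "1 \<le> Jidx (pmf q) x" "theta (pmf q) (Jidx (pmf q) x) \<le> x"
    "\<And>l. 1 \<le> l \<Longrightarrow> theta (pmf q) l \<le> x \<Longrightarrow> l \<le> Jidx (pmf q) x"
proof -
  let ?L = "{l. 1 \<le> l \<and> theta (pmf q) l \<le> x}"
  obtain l0 where l0: "x < theta (pmf q) l0" using theta_exceeds[OF supp x(2)] by blast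
  have "?L \<subseteq> {..<l0}"
    using theta_mono[of l0 _ q] l0 by (force simp: not_less[symmetric])
  then have fin: "finite ?L" by (rule finite_subset) simp
  have ne: "1 \<in> ?L" using x by simp
  have J: "Jidx (pmf q) x = Max ?L"
    unfolding Jidx_def using fin ne by (subst cSup_eq_Max) auto
  have "Max ?L \<in> ?L" using fin ne by (intro Max_in) auto
  then show "1 \<le> Jidx (pmf q) x" "theta (pmf q) (Jidx (pmf q) x) \<le> x" using J by auto
  show "\<And>l. 1 \<le> l \<Longrightarrow> theta (pmf q) l \<le> x \<Longrightarrow> l \<le> Jidx (pmf q) x"
    using J fin by (auto intro: Max_ge)
qed

lemma Jidx_change:
  fixes q :: "int pmf"
  assumes supp: "set_pmf q \<subseteq> {-1..}" and xy: "0 \<le> x" "x \<le> y" "y < 1"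
    and ne: "Jidx (pmf q) x \<noteq> Jidx (pmf q) y"
  shows "\<exists>l. x < theta (pmf q) l \<and> theta (pmf q) l \<le> y"
proof (rule ccontr)
  assume none: "\<not> ?thesis"
  have Jx: "1 \<le> Jidx (pmf q) x" "theta (pmf q) (Jidx (pmf q) x) \<le> x"
    "\<And>l. 1 \<le> l \<Longrightarrow> theta (pmf q) l \<le> x \<Longrightarrow> l \<le> Jidx (pmf q) x"
    using Jidx_greatest[OF supp xy(1)] xy by auto
  have Jy: "1 \<le> Jidx (pmf q) y" "theta (pmf q) (Jidx (pmf q) y) \<le> y"
    "\<And>l. 1 \<le> l \<Longrightarrow> theta (pmf q) l \<le> y \<Longrightarrow> l \<le> Jidx (pmf q) y"
    using Jidx_greatest[OF supp _ xy(3)] xy by auto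
  have "theta (pmf q) (Jidx (pmf q) y) \<le> x" using none Jy(2) by (meson not_le)
  then have "Jidx (pmf q) y \<le> Jidx (pmf q) x" using Jx(3) Jy(1) by blast
  moreover have "Jidx (pmf q) x \<le> Jidx (pmf q) y" using Jx(1,2) Jy(3) xy(2) by force
  ultimately show False using ne by simp
qed

section \<open>Dyadic partial sums\<close>

lemma Spart_Suc: "Spart Y (Suc n) \<omega> = Spart Y n \<omega> + (1/2) ^ Suc n * of_bool (Y (Suc n) \<omega>)"
  unfolding Spart_def by (simp add: sum.cl_ivl_Suc)

lemma Spart_increment:
  "Spart Y m \<omega> \<le> Spart Y (m + d) \<omega> \<and> Spart Y (m + d) \<omega> \<le> Spart Y m \<omega> + (1/2)^m - (1/2)^(m+d)"
proof (induction d)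
  case (Suc d)
  let ?h = "(1/2::real) ^ Suc (m + d)" and ?digit = "of_bool (Y (Suc (m + d)) \<omega>) :: real"
  have "(1/2::real) ^ (m + d) = 2 * ?h" "0 \<le> ?h * ?digit" "?h * ?digit \<le> ?h" by simp_all
  then have "Spart Y m \<omega> \<le> Spart Y (Suc (m + d)) \<omega> \<and>
      Spart Y (Suc (m + d)) \<omega> \<le> Spart Y m \<omega> + (1/2)^m - ?h"
    using Suc.IH Spart_Suc[of Y "m + d" \<omega>] by linarith
  then show ?case by simp
qed simp

lemma Spart_lt_1: "Spart Y m \<omega> < 1"
proof -
  have "Spart Y m \<omega> \<le> 1 - (1/2)^m" using Spart_increment[of Y 0 \<omega> m] by (simp add: Spart_def)
  moreover have "(0::real) < (1/2)^m" by simp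
  ultimately show ?thesis by linarith
qed

lemma Spart_nonneg: "0 \<le> Spart Y m \<omega>"
  unfolding Spart_def by (intro sum_nonneg) simp

lemma Spart_later:
  assumes "m \<le> m'"
  shows "Spart Y m \<omega> \<le> Spart Y m' \<omega>" "Spart Y m' \<omega> < Spart Y m \<omega> + (1/2)^m"
proof -
  obtain d where d: "m' = m + d" using assms le_Suc_ex by blast
  have "(0::real) < (1/2)^(m+d)" by simp
  with Spart_increment[of Y m \<omega> d]
  show "Spart Y m \<omega> \<le> Spart Y m' \<omega>" "Spart Y m' \<omega> < Spart Y m \<omega> + (1/2)^m"
    unfolding d by linarith+
qed

lemma boundary_in_window:
  fixes q :: "int pmf"
  assumes supp: "set_pmf q \<subseteq> {-1..}" and m: "1 \<le> m" and lt: "enat m < Ncoin (pmf q) Y \<omega>"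
  shows "\<exists>l. Spart Y m \<omega> < theta (pmf q) l \<and> theta (pmf q) l < Spart Y m \<omega> + (1/2)^m"
proof (rule ccontr)
  assume none: "\<not> ?thesis"
  have "Jidx (pmf q) (Spart Y m \<omega>) = Jidx (pmf q) (Spart Y m' \<omega>)" if "m \<le> m'" for m'
  proof (rule ccontr)
    note close = Spart_later[OF that, of Y \<omega>]
    assume "Jidx (pmf q) (Spart Y m \<omega>) \<noteq> Jidx (pmf q) (Spart Y m' \<omega>)"
    from Jidx_change[OF supp Spart_nonneg close(1) Spart_lt_1 this] none close(2)
    show False by fastforce
  qed
  then have "Ncoin (pmf q) Y \<omega> \<le> enat m"
    unfolding Ncoin_def using m by (intro Inf_lower) blast
  with lt show False by simp
qed

section \<open>Probability estimates for fair coins\<close>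

abbreviation fair_coin :: "bool measure" where
  "fair_coin \<equiv> measure_pmf (bernoulli_pmf (1/2))"

locale fair_coins = prob_space M for M :: "'a measure" +
  fixes Y :: "nat \<Rightarrow> 'a \<Rightarrow> bool"
  assumes indep_coins: "indep_vars (\<lambda>_. fair_coin) Y {1..}"
    and coin_distr: "\<And>r. r \<ge> 1 \<Longrightarrow> distr M fair_coin (Y r) = fair_coin"
begin

lemma coin_measurable: "r \<ge> 1 \<Longrightarrow> Y r \<in> measurable M fair_coin"
  using indep_coins unfolding indep_vars_def by auto

lemma Spart_measurable[measurable]: "Spart Y m \<in> borel_measurable M"
proof -
  have "(\<lambda>\<omega>. (1/2::real) ^ r * of_bool (Y r \<omega>)) \<in> borel_measurable M" if "r \<in> {1..m}" for r
    using coin_measurable[of r] that by simp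
  then show ?thesis unfolding Spart_def[abs_def] by (intro borel_measurable_sum) auto
qed

lemma prob_coin: "r \<ge> 1 \<Longrightarrow> prob {\<omega> \<in> space M. Y r \<omega> = b} = 1/2"
proof -
  assume r: "r \<ge> 1"
  have "prob {\<omega> \<in> space M. Y r \<omega> = b} = measure (distr M fair_coin (Y r)) {b}"
    using coin_measurable[OF r] by (subst measure_distr) (auto intro: arg_cong[where f=prob])
  also have "\<dots> = 1/2" using coin_distr[OF r] by (cases b) (simp_all add: measure_pmf_single)
  finally show ?thesis .
qed

lemma coin_indep_Spart: "indep_var borel (\<lambda>\<omega>. of_bool (Y (Suc m) \<omega>) :: real) borel (Spart Y m)"
proof -
  let ?digit = "\<lambda>f. of_bool (f (Suc m)) :: real"
    and ?sum = "\<lambda>f. \<Sum>r\<in>{1..m}. (1/2::real) ^ r * of_bool (f r)"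
  have "?digit \<in> borel_measurable (PiM {Suc m} (\<lambda>_. fair_coin))"
    and "?sum \<in> borel_measurable (PiM {1..m} (\<lambda>_. fair_coin))" by measurable
  moreover have "indep_var (PiM {Suc m} (\<lambda>_. fair_coin)) (\<lambda>\<omega>. restrict (\<lambda>i. Y i \<omega>) {Suc m})
      (PiM {1..m} (\<lambda>_. fair_coin)) (\<lambda>\<omega>. restrict (\<lambda>i. Y i \<omega>) {1..m})"
    by (rule indep_var_restrict[OF indep_coins]) auto
  ultimately have "indep_var borel (?digit \<circ> (\<lambda>\<omega>. restrict (\<lambda>i. Y i \<omega>) {Suc m}))
      borel (?sum \<circ> (\<lambda>\<omega>. restrict (\<lambda>i. Y i \<omega>) {1..m}))"
    by (intro indep_var_compose)
  also have "?digit \<circ> (\<lambda>\<omega>. restrict (\<lambda>i. Y i \<omega>) {Suc m}) = (\<lambda>\<omega>. of_bool (Y (Suc m) \<omega>))"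
    by auto
  also have "?sum \<circ> (\<lambda>\<omega>. restrict (\<lambda>i. Y i \<omega>) {1..m}) = Spart Y m"
    by (auto simp: Spart_def fun_eq_iff intro: sum.cong)
  finally show ?thesis .
qed

lemma prob_coin_and_Spart:
  assumes I: "I \<in> sets borel"
  shows "prob {\<omega> \<in> space M. Y (Suc m) \<omega> = b \<and> Spart Y m \<omega> \<in> I}
       = 1/2 * prob {\<omega> \<in> space M. Spart Y m \<omega> \<in> I}"
proof -
  let ?D = "\<lambda>\<omega>. of_bool (Y (Suc m) \<omega>) :: real"
  have "prob ((\<lambda>\<omega>. (?D \<omega>, Spart Y m \<omega>)) -` ({of_bool b} \<times> I) \<inter> space M)
      = prob (?D -` {of_bool b} \<inter> space M) * prob (Spart Y m -` I \<inter> space M)"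
    using I by (intro indep_varD[OF coin_indep_Spart]) auto
  moreover have "?D -` {of_bool b} \<inter> space M = {\<omega> \<in> space M. Y (Suc m) \<omega> = b}" by auto
  ultimately show ?thesis
    using prob_coin[of "Suc m" b] by (simp add: vimage_def Int_def conj_commute of_bool_eq_iff)
qed

text \<open>Step (2): \<open>S_m\<close> is uniformly distributed on the dyadic grid of mesh \<open>2^-m\<close>, so a
  half-open interval of length \<open>2^-m\<close> carries probability at most \<open>2^-m\<close>.\<close>
lemma prob_Spart_interval:
  "prob {\<omega> \<in> space M. a \<le> Spart Y m \<omega> \<and> Spart Y m \<omega> < a + (1/2)^m} \<le> (1/2)^m"
proof (induction m arbitrary: a)
  case (Suc m)
  define h :: real where "h = (1/2)^Suc m"
  let ?P = "\<lambda>I. prob {\<omega> \<in> space M. Spart Y m \<omega> \<in> I}"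
  let ?U = "\<lambda>b I. {\<omega> \<in> space M. Y (Suc m) \<omega> = b \<and> Spart Y m \<omega> \<in> I}"
  have [measurable]: "Y (Suc m) \<in> measurable M (count_space UNIV)"
    using coin_measurable[of "Suc m"] by simp
  have U: "?U b I \<in> sets M" if "I \<in> sets borel" for b I using that by measurable
  have "{\<omega> \<in> space M. a \<le> Spart Y (Suc m) \<omega> \<and> Spart Y (Suc m) \<omega> < a + h}
      \<subseteq> ?U False {a..<a+h} \<union> ?U True {a-h..<a}"
    by (auto simp: Spart_Suc h_def)
  then have "prob {\<omega> \<in> space M. a \<le> Spart Y (Suc m) \<omega> \<and> Spart Y (Suc m) \<omega> < a + h}
      \<le> prob (?U False {a..<a+h} \<union> ?U True {a-h..<a})"
    by (intro finite_measure_mono) (auto intro: U)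
  also have "\<dots> \<le> prob (?U False {a..<a+h}) + prob (?U True {a-h..<a})"
    by (intro measure_subadditive U) auto
  also have "\<dots> = 1/2 * (?P {a-h..<a} + ?P {a..<a+h})"
    unfolding prob_coin_and_Spart[OF atLeastLessThan_borel] by (simp add: algebra_simps)
  also have "?P {a-h..<a} + ?P {a..<a+h} = ?P {a-h..<a-h + (1/2)^m}"
  proof -
    have "{a-h..<a-h + (1/2)^m} = {a-h..<a} \<union> {a..<a+h}" by (auto simp: h_def)
    then show ?thesis
      by (subst finite_measure_Union[symmetric]) (auto intro!: arg_cong[where f=prob])
  qed
  also have "\<dots> \<le> (1/2)^m" using Suc.IH[of "a - h"] by simp
  finally show ?case by (simp add: h_def)
qed simp

text \<open>At time \<open>m\<close> the sequence is unsettled if \<open>S_m\<close> lies in the window just below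
  a boundary \<open>theta_l < 1 - 2^-m\<close>, or within \<open>2\<cdot>2^-m\<close> of 1.\<close>
definition crossing_event :: "(int \<Rightarrow> real) \<Rightarrow> nat \<Rightarrow> nat \<Rightarrow> 'a set" where
  "crossing_event p m l = {\<omega> \<in> space M. theta p l < 1 - (1/2)^m \<and>
      theta p l - (1/2)^m \<le> Spart Y m \<omega> \<and> Spart Y m \<omega> < theta p l}"

definition top_event :: "nat \<Rightarrow> 'a set" where
  "top_event m = {\<omega> \<in> space M. 1 - 2 * (1/2)^m \<le> Spart Y m \<omega>}"

definition unsettled :: "(int \<Rightarrow> real) \<Rightarrow> nat \<Rightarrow> 'a set" where
  "unsettled p m = (\<Union>l. crossing_event p m l) \<union> top_event m"

lemma events_measurable[measurable]:
  "crossing_event p m l \<in> sets M" "top_event m \<in> sets M" "unsettled p m \<in> sets M"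
  unfolding crossing_event_def top_event_def unsettled_def by measurable

lemma Ncoin_gt_imp_unsettled:
  fixes q :: "int pmf"
  assumes supp: "set_pmf q \<subseteq> {-1..}" and \<omega>: "\<omega> \<in> space M" and lt: "enat m < Ncoin (pmf q) Y \<omega>"
  shows "\<omega> \<in> unsettled (pmf q) m"
proof (cases "m = 0")
  case True
  then show ?thesis using \<omega> by (simp add: unsettled_def top_event_def Spart_def)
next
  case False
  with boundary_in_window[OF supp _ lt] obtain l where
    l: "Spart Y m \<omega> < theta (pmf q) l" "theta (pmf q) l < Spart Y m \<omega> + (1/2)^m" by auto
  then have "\<omega> \<in> crossing_event (pmf q) m l \<or> \<omega> \<in> top_event m"
    using \<omega> by (auto simp: crossing_event_def top_event_def)
  then show ?thesis by (auto simp: unsettled_def)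
qed

lemma emeasure_crossing_event:
  "emeasure M (crossing_event p m l) \<le> ennreal (if (1/2)^m < 1 - theta p l then (1/2)^m else 0)"
proof (cases "(1/2::real)^m < 1 - theta p l")
  case True
  let ?I = "{\<omega> \<in> space M. theta p l - (1/2)^m \<le> Spart Y m \<omega> \<and>
      Spart Y m \<omega> < (theta p l - (1/2)^m) + (1/2)^m}"
  have "crossing_event p m l \<subseteq> ?I" by (auto simp: crossing_event_def)
  moreover have "?I \<in> sets M" by measurable
  ultimately have "prob (crossing_event p m l) \<le> prob ?I" by (rule finite_measure_mono)
  also have "\<dots> \<le> (1/2)^m" by (rule prob_Spart_interval)
  finally have "prob (crossing_event p m l) \<le> (1/2)^m" .
  then show ?thesis using True by (simp add: emeasure_eq_measure)
next
  case False
  then have "crossing_event p m l = {}" by (auto simp: crossing_event_def)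
  then show ?thesis by simp
qed

text \<open>Since \<open>S_m \<le> 1 - 2^-m\<close>, the event \<open>S_m \<ge> 1 - 2\<cdot>2^-m\<close> is covered by two intervals of length \<open>2^-m\<close>.\<close>
lemma emeasure_top_event: "emeasure M (top_event m) \<le> ennreal (2 * (1/2)^m)"
proof -
  let ?I = "\<lambda>a. {\<omega> \<in> space M. a \<le> Spart Y m \<omega> \<and> Spart Y m \<omega> < a + (1/2)^m}"
  have I: "?I a \<in> sets M" for a by measurable
  have "top_event m \<subseteq> ?I (1 - 2 * (1/2)^m) \<union> ?I (1 - (1/2)^m)"
    using Spart_lt_1[of Y m] by (auto simp: top_event_def)
  then have "prob (top_event m) \<le> prob (?I (1 - 2 * (1/2)^m) \<union> ?I (1 - (1/2)^m))"
    by (intro finite_measure_mono) (auto intro: I)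
  also have "\<dots> \<le> prob (?I (1 - 2 * (1/2)^m)) + prob (?I (1 - (1/2)^m))"
    by (intro measure_subadditive I) auto
  also have "\<dots> \<le> (1/2)^m + (1/2)^m"
    by (intro add_mono prob_Spart_interval)
  finally show ?thesis by (simp add: emeasure_eq_measure)
qed

lemma emeasure_unsettled:
  "emeasure M (unsettled p m)
    \<le> (\<Sum>l. ennreal (if (1/2)^m < 1 - theta p l then (1/2)^m else 0)) + ennreal (2 * (1/2)^m)"
proof -
  have "emeasure M (\<Union>l. crossing_event p m l) \<le> (\<Sum>l. emeasure M (crossing_event p m l))"
    by (intro emeasure_subadditive_countably) auto
  also have "\<dots> \<le> (\<Sum>l. ennreal (if (1/2)^m < 1 - theta p l then (1/2)^m else 0))"
    by (intro suminf_le summableI emeasure_crossing_event)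
  finally have crossing: "emeasure M (\<Union>l. crossing_event p m l)
      \<le> (\<Sum>l. ennreal (if (1/2)^m < 1 - theta p l then (1/2)^m else 0))" .
  have "emeasure M (unsettled p m) \<le> emeasure M (\<Union>l. crossing_event p m l) + emeasure M (top_event m)"
    unfolding unsettled_def by (intro emeasure_subadditive) measurable
  with crossing emeasure_top_event[of m] show ?thesis
    by (meson add_mono order_trans)
qed

text \<open>Writing \<open>N = \<Sum>\<^sub>m [m < N]\<close> and using \<open>[m < N] \<le> [unsettled at m]\<close> bounds \<open>E[N]\<close>.\<close>
lemma nn_integral_Ncoin_le:
  fixes q :: "int pmf"
  assumes supp: "set_pmf q \<subseteq> {-1..}"
  shows "(\<integral>\<^sup>+\<omega>. ennreal_of_enat (Ncoin (pmf q) Y \<omega>) \<partial>M) \<le> (\<Sum>m. emeasure M (unsettled (pmf q) m))"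
proof -
  have "ennreal_of_enat (Ncoin (pmf q) Y \<omega>) \<le> (\<Sum>m. indicator (unsettled (pmf q) m) \<omega>)"
    if "\<omega> \<in> space M" for \<omega>
    unfolding sums_unique[OF ennreal_of_enat_sums]
    using Ncoin_gt_imp_unsettled[OF supp that] by (intro suminf_le summableI) (simp split: split_indicator)
  then have "(\<integral>\<^sup>+\<omega>. ennreal_of_enat (Ncoin (pmf q) Y \<omega>) \<partial>M)
      \<le> (\<integral>\<^sup>+\<omega>. (\<Sum>m. indicator (unsettled (pmf q) m) \<omega>) \<partial>M)"
    by (intro nn_integral_mono) auto
  also have "\<dots> = (\<Sum>m. emeasure M (unsettled (pmf q) m))"
    by (subst nn_integral_suminf) auto
  finally show ?thesis .
qed

lemma nn_integral_Ncoin_le_tail: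
  fixes q :: "int pmf"
  assumes supp: "set_pmf q \<subseteq> {-1..}"
  shows "(\<integral>\<^sup>+\<omega>. ennreal_of_enat (Ncoin (pmf q) Y \<omega>) \<partial>M)
      \<le> 2 * (\<Sum>l. ennreal (1 - theta (pmf q) l)) + 4"
proof -
  let ?G = "\<lambda>m l. ennreal (if (1/2::real)^m < 1 - theta (pmf q) l then (1/2)^m else 0)"
  have "(\<integral>\<^sup>+\<omega>. ennreal_of_enat (Ncoin (pmf q) Y \<omega>) \<partial>M) \<le> (\<Sum>m. emeasure M (unsettled (pmf q) m))"
    by (rule nn_integral_Ncoin_le[OF supp])
  also have "\<dots> \<le> (\<Sum>m. (\<Sum>l. ?G m l) + ennreal (2 * (1/2)^m))"
    by (intro suminf_le summableI emeasure_unsettled)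
  also have "\<dots> = (\<Sum>m. \<Sum>l. ?G m l) + (\<Sum>m. ennreal (2 * (1/2::real)^m))"
    by (intro suminf_add[symmetric] summableI)
  also have "(\<Sum>m. \<Sum>l. ?G m l) = (\<Sum>l. \<Sum>m. ?G m l)"
    by (rule suminf_swap_ennreal)
  also have "(\<Sum>m. ennreal (2 * (1/2::real)^m)) = 4"
    using sums_mult[OF geometric_sums[of "1/2::real"], of 2]
    by (subst suminf_ennreal_eq[where x=4]) simp_all
  also have "(\<Sum>l. \<Sum>m. ?G m l) \<le> (\<Sum>l. ennreal (2 * (1 - theta (pmf q) l)))"
    using theta_le_1[OF supp] by (intro suminf_le summableI dyadic_sum_below) simp
  also have "\<dots> = 2 * (\<Sum>l. ennreal (1 - theta (pmf q) l))"
  proof -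
    have "ennreal (2 * (1 - theta (pmf q) l)) = 2 * ennreal (1 - theta (pmf q) l)" for l
      by (subst ennreal_mult') simp_all
    then show ?thesis by simp
  qed
  finally show ?thesis by simp
qed

end

section \<open>The moment bound\<close>

lemma tail_sum_theta:
  fixes q :: "int pmf"
  assumes supp: "set_pmf q \<subseteq> {-1..}"
  shows "(\<Sum>l. ennreal (1 - theta (pmf q) l)) = 2 + (\<Sum>k. ennreal (real (Suc k) * pmf q (int k)))"
proof -
  let ?p = "\<lambda>k::nat. pmf q (int k)"
  have tail: "ennreal (1 - theta (pmf q) (l + 2)) = (\<Sum>k. ennreal (if l \<le> k then ?p k else 0))" for l
  proof -
    have "(\<Sum>k. ennreal (if l \<le> k then ?p k else 0)) = (\<Sum>k. ennreal (?p (k + l)))"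
      using suminf_offset[OF summableI, of "\<lambda>k. ennreal (if l \<le> k then ?p k else 0)" l] by simp
    also have "\<dots> = ennreal (1 - theta (pmf q) (Suc (Suc l)))"
      by (rule suminf_ennreal_eq[OF _ theta_tail_sums[OF supp]]) simp
    finally show ?thesis by (simp add: numeral_2_eq_2)
  qed
  have count: "(\<Sum>l. ennreal (if l \<le> k then ?p k else 0)) = ennreal (real (Suc k) * ?p k)" for k
  proof -
    have "(\<Sum>l. ennreal (if l \<le> k then ?p k else 0)) = (\<Sum>l\<le>k. ennreal (?p k))"
      by (subst suminf_finite[of "{..k}"]) auto
    then show ?thesis by (simp add: ennreal_mult ennreal_of_nat_eq_real_of_nat)
  qed
  have "(\<Sum>l. ennreal (1 - theta (pmf q) l))
      = (\<Sum>l. ennreal (1 - theta (pmf q) (l + 2))) + (\<Sum>l<2. ennreal (1 - theta (pmf q) l))"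
    by (rule suminf_offset) (rule summableI)
  also have "(\<Sum>l<2. ennreal (1 - theta (pmf q) l)) = 2"
    by (simp add: numeral_2_eq_2)
  also have "(\<Sum>l. ennreal (1 - theta (pmf q) (l + 2))) = (\<Sum>k. \<Sum>l. ennreal (if l \<le> k then ?p k else 0))"
    unfolding tail by (rule suminf_swap_ennreal)
  finally show ?thesis by (simp only: count add.commute)
qed

text \<open>The ball \<open>V_j(k)\<close> contains the \<open>k+1\<close> points obtained by moving along one coordinate axis.\<close>
lemma card_Vball_ge:
  fixes j :: "int ^ 'd"
  shows "Suc k \<le> card (Vball j k)"
proof -
  obtain u :: 'd where True by blast
  define g where "g t = (\<chi> v. if v = u then j $ v + int t else j $ v)" for t :: nat
  have inj: "inj_on g {..k}"
  proof (rule inj_onI)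
    fix s t assume "g s = g t"
    then have "g s $ u = g t $ u" by simp
    then show "s = t" by (simp add: g_def)
  qed
  have "g ` {..k} \<subseteq> Vball j k"
  proof
    fix x assume "x \<in> g ` {..k}"
    then obtain t where t: "t \<le> k" "x = g t" by auto
    have "(\<Sum>v\<in>UNIV. \<bar>x $ v - j $ v\<bar>) = (\<Sum>v\<in>UNIV. if v = u then int t else 0)"
      using t by (intro sum.cong) (auto simp: g_def)
    with t show "x \<in> Vball j k" by (simp add: Vball_def)
  qed
  moreover have "finite (Vball j k)"
  proof (rule finite_subset)
    show "Vball j k \<subseteq> vec_lambda ` (PiE UNIV (\<lambda>v. {j $ v - int k .. j $ v + int k}))"
    proof
      fix x assume x: "x \<in> Vball j k"
      have "\<bar>x $ v - j $ v\<bar> \<le> int k" for v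
        using member_le_sum[of v UNIV "\<lambda>v. \<bar>x $ v - j $ v\<bar>"] x by (simp add: Vball_def)
      then have "j $ v - int k \<le> x $ v \<and> x $ v \<le> j $ v + int k" for v
        unfolding abs_le_iff by (metis add.commute diff_le_eq le_diff_eq minus_diff_eq neg_le_iff_le)
      then have "vec_nth x \<in> PiE UNIV (\<lambda>v. {j $ v - int k .. j $ v + int k})"
        by (auto simp: PiE_iff)
      then show "x \<in> vec_lambda ` (PiE UNIV (\<lambda>v. {j $ v - int k .. j $ v + int k}))"
        by (metis image_eqI vec_lambda_eta)
    qed
  qed (intro finite_imageI finite_PiE; simp)
  ultimately have "card (g ` {..k}) \<le> card (Vball j k)" by (rule card_mono[rotated])
  with inj show ?thesis by (simp add: card_image)
qed

lemma tail_sum_theta_le: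
  fixes q :: "int pmf" and j :: "int ^ 'd"
  assumes supp: "set_pmf q \<subseteq> {-1..}"
    and summable: "summable (\<lambda>k::nat. real (card (Vball j k)) * pmf q (int k))"
  shows "(\<Sum>l. ennreal (1 - theta (pmf q) l))
      \<le> 2 + ennreal (\<Sum>k. real (card (Vball j k)) * pmf q (int k))"
proof -
  have "real (Suc k) \<le> real (card (Vball j k))" for k
    using card_Vball_ge by (simp only: of_nat_le_iff)
  then have "(\<Sum>k. ennreal (real (Suc k) * pmf q (int k)))
      \<le> (\<Sum>k. ennreal (real (card (Vball j k)) * pmf q (int k)))"
    by (intro suminf_le summableI ennreal_leI mult_right_mono) auto
  also have "\<dots> = ennreal (\<Sum>k. real (card (Vball j k)) * pmf q (int k))"
    by (rule suminf_ennreal2[OF _ summable]) simp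
  finally show ?thesis unfolding tail_sum_theta[OF supp] by (rule add_left_mono)
qed

theorem mainTheorem12:
  fixes lam :: "int ^ 'd \<Rightarrow> int pmf"
    and M :: "'a measure"
    and Y :: "nat \<Rightarrow> 'a \<Rightarrow> bool"
  assumes supp: "\<And>j. set_pmf (lam j) \<subseteq> {-1..}"
    and bound: "\<exists>c<1. \<forall>j. summable (\<lambda>k::nat. real (card (Vball j k)) * pmf (lam j) (int k))
                        \<and> (\<Sum>k. real (card (Vball j k)) * pmf (lam j) (int k)) \<le> c"
    and M: "prob_space M"
    and indep: "prob_space.indep_vars M (\<lambda>_. measure_pmf (bernoulli_pmf (1/2))) Y {1..}"
    and fair: "\<And>r. r \<ge> 1 \<Longrightarrow> distr M (measure_pmf (bernoulli_pmf (1/2))) (Y r)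
                                   = measure_pmf (bernoulli_pmf (1/2))"
  shows "(SUP j. \<integral>\<^sup>+ \<omega>. ennreal_of_enat (Ncoin (pmf (lam j)) Y \<omega>) \<partial>M) < \<infinity>"
proof -
  interpret fair_coins M Y
    by (intro fair_coins.intro fair_coins_axioms.intro M indep fair)
  obtain c where "c < 1" and c: "\<And>j. summable (\<lambda>k::nat. real (card (Vball j k)) * pmf (lam j) (int k))"
    "\<And>j. (\<Sum>k. real (card (Vball j k)) * pmf (lam j) (int k)) \<le> c"
    using bound by blast
  have "(\<integral>\<^sup>+ \<omega>. ennreal_of_enat (Ncoin (pmf (lam j)) Y \<omega>) \<partial>M) \<le> 2 * (2 + 1) + 4" for j
  proof -
    have "(\<Sum>l. ennreal (1 - theta (pmf (lam j)) l)) \<le> 2 + 1"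
      using tail_sum_theta_le[OF supp c(1)] c(2)[of j] \<open>c < 1\<close>
      by (meson add_left_mono ennreal_leI ennreal_le_1 less_imp_le order_trans)
    with nn_integral_Ncoin_le_tail[OF supp] show ?thesis
      by (meson add_right_mono mult_left_mono order_trans zero_le)
  qed
  then have "(SUP j. \<integral>\<^sup>+ \<omega>. ennreal_of_enat (Ncoin (pmf (lam j)) Y \<omega>) \<partial>M) \<le> 2 * (2 + 1) + 4"
    by (rule SUP_least)
  also have "(2 * (2 + 1) + 4 :: ennreal) < \<infinity>" by simp
  finally show ?thesis .
qed

end
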